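(* Consider the disclosure model described in the context. Let $d_F$ be a full-disclosure policy. Then $\Gamma(d_F)\ge\Gamma(d)$ for every Pareto efficient disclosure policy $d\in\mathcal{D}$. That is, full disclosure induces the highest expected emission among all efficient disclosure policies.
   Context: Emissions lie in $E=[0,\bar e]$ with $\bar e>0$. The firm's type $\theta\in\Theta=[\underline\theta,\bar\theta]$ is private information with a continuous density $f=F'$ on $\Theta$. The firm's profit is $\tilde\pi(\theta,e,\tilde e)$ with actual emission $e$ and market-perceived emission $\tilde e$; it is strictly increasing in $e$ and strictly decreasing in $\tilde e$. Standing assumptions: $\tilde\pi$ is continuous on $\Theta\times E\times E$ and $C^2$ on its interior; $\pi(\theta,e):=\tilde\pi(\theta,e,e)$ is strictly concave in $e$; and $\pi(\theta,0)<\pi(\theta,\bar e)$ for all $\theta$. A disclosure policy is a function $d:E\to E$ (a partition of $E$ into level sets). An emission $e$ is belief-compatible under $d$ if $e\ge e'$ whenever $d(e')=d(e)$; $\tilde E_d$ is the set of such levels. The type-$\theta$ firm chooses $e\in\tilde E_d$ maximizing $\pi(\theta,e)$. $\mathcal{D}$ is the set of policies for which the maximum is attained for every type. For $d\in\mathcal{D}$, $\pi_d(\theta)=\max_{e\in\tilde E_d}\pi(\theta,e)$, and $\gamma_d(\theta)$ is the lowest maximizer. Further, $\Pi(d)=\int_\Theta\pi_d\,dF$ and $\Gamma(d)=\int_\Theta\gamma_d\,dF$. A policy $d\in\mathcal{D}$ is Pareto efficient if there is no $d'\in\mathcal{D}$ with $\Pi(d')\ge\Pi(d)$ and $\Gamma(d')\le\Gamma(d)$,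 at least one strict. Let $\hat{\mathbf e}(\theta):=\arg\max_{e\in E}\pi(\theta,e)$. A full-disclosure policy is a policy $d$ such that, for every $e\in\hat{\mathbf e}(\Theta)$, $e$ is alone in its cell: $d(e')=d(e)$ implies $e'=e$. Such a policy belongs to $\mathcal{D}$. *)

theory Defs
  imports "HOL-Analysis.Analysis"
begin

text \<open>Model of disclosure. Parameters: emission cap ebar, type bounds tlo thi,
  density f on [tlo, thi], profit pit theta e e_perceived.\<close>

definition C2_on :: "'a::real_normed_vector set \<Rightarrow> ('a \<Rightarrow> real) \<Rightarrow> bool" where
  "C2_on S g \<longleftrightarrow> (\<exists>(D :: 'a \<Rightarrow> 'a \<Rightarrow>\<^sub>L real) (D2 :: 'a \<Rightarrow> 'a \<Rightarrow>\<^sub>L ('a \<Rightarrow>\<^sub>L real)).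
      (\<forall>x\<in>S. (g has_derivative blinfun_apply (D x)) (at x)) \<and>
      (\<forall>x\<in>S. (D has_derivative blinfun_apply (D2 x)) (at x)) \<and>
      continuous_on S D2)"

definition Eset :: "real \<Rightarrow> real set" where
  "Eset ebar = {0..ebar}"

definition pi_diag :: "(real \<Rightarrow> real \<Rightarrow> real \<Rightarrow> real) \<Rightarrow> real \<Rightarrow> real \<Rightarrow> real" where
  "pi_diag pit \<theta> e = pit \<theta> e e"

definition model_assms ::
  "real \<Rightarrow> real \<Rightarrow> real \<Rightarrow> (real \<Rightarrow> real) \<Rightarrow> (real \<Rightarrow> real \<Rightarrow> real \<Rightarrow> real) \<Rightarrow> bool" where
  "model_assms ebar tlo thi f pit \<longleftrightarrow>
     ebar > 0 \<and> tlo < thi \<and>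
     continuous_on {tlo..thi} f \<and> (\<forall>\<theta>\<in>{tlo..thi}. f \<theta> \<ge> 0) \<and>
     (f has_integral 1) {tlo..thi} \<and>
     continuous_on ({tlo..thi} \<times> Eset ebar \<times> Eset ebar) (\<lambda>(\<theta>, e, e'). pit \<theta> e e') \<and>
     C2_on ({tlo<..<thi} \<times> {0<..<ebar} \<times> {0<..<ebar}) (\<lambda>(\<theta>, e, e'). pit \<theta> e e') \<and>
     (\<forall>\<theta>\<in>{tlo..thi}. \<forall>e'\<in>Eset ebar. \<forall>e1\<in>Eset ebar. \<forall>e2\<in>Eset ebar.
        e1 < e2 \<longrightarrow> pit \<theta> e1 e' < pit \<theta> e2 e') \<and>
     (\<forall>\<theta>\<in>{tlo..thi}. \<forall>e\<in>Eset ebar. \<forall>e1\<in>Eset ebar. \<forall>e2\<in>Eset ebar.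
        e1 < e2 \<longrightarrow> pit \<theta> e e2 < pit \<theta> e e1) \<and>
     (\<forall>\<theta>\<in>{tlo..thi}. \<forall>x\<in>Eset ebar. \<forall>y\<in>Eset ebar. x \<noteq> y \<longrightarrow>
        (\<forall>u::real. 0 < u \<and> u < 1 \<longrightarrow>
           pi_diag pit \<theta> ((1 - u) * x + u * y) > (1 - u) * pi_diag pit \<theta> x + u * pi_diag pit \<theta> y)) \<and>
     (\<forall>\<theta>\<in>{tlo..thi}. pi_diag pit \<theta> 0 < pi_diag pit \<theta> ebar)"

definition is_policy :: "real \<Rightarrow> (real \<Rightarrow> real) \<Rightarrow> bool" where
  "is_policy ebar d \<longleftrightarrow> d ` Eset ebar \<subseteq> Eset ebar"

definition Etilde :: "real \<Rightarrow> (real \<Rightarrow> real) \<Rightarrow> real set" where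
  "Etilde ebar d = {e \<in> Eset ebar. \<forall>e'\<in>Eset ebar. d e' = d e \<longrightarrow> e' \<le> e}"

definition Dset :: "real \<Rightarrow> real \<Rightarrow> real \<Rightarrow> (real \<Rightarrow> real \<Rightarrow> real \<Rightarrow> real) \<Rightarrow> (real \<Rightarrow> real) set" where
  "Dset ebar tlo thi pit = {d. is_policy ebar d \<and>
     (\<forall>\<theta>\<in>{tlo..thi}. \<exists>e\<in>Etilde ebar d. \<forall>e'\<in>Etilde ebar d. pi_diag pit \<theta> e' \<le> pi_diag pit \<theta> e)}"

definition pi_d :: "real \<Rightarrow> (real \<Rightarrow> real \<Rightarrow> real \<Rightarrow> real) \<Rightarrow> (real \<Rightarrow> real) \<Rightarrow> real \<Rightarrow> real" where
  "pi_d ebar pit d \<theta> = (SUP e\<in>Etilde ebar d. pi_diag pit \<theta> e)"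

definition gamma_d :: "real \<Rightarrow> (real \<Rightarrow> real \<Rightarrow> real \<Rightarrow> real) \<Rightarrow> (real \<Rightarrow> real) \<Rightarrow> real \<Rightarrow> real" where
  "gamma_d ebar pit d \<theta> = Inf {e \<in> Etilde ebar d. pi_diag pit \<theta> e = pi_d ebar pit d \<theta>}"

definition Pi_exp :: "real \<Rightarrow> real \<Rightarrow> real \<Rightarrow> (real \<Rightarrow> real) \<Rightarrow> (real \<Rightarrow> real \<Rightarrow> real \<Rightarrow> real) \<Rightarrow> (real \<Rightarrow> real) \<Rightarrow> real" where
  "Pi_exp ebar tlo thi f pit d = integral {tlo..thi} (\<lambda>\<theta>. pi_d ebar pit d \<theta> * f \<theta>)"

definition Gamma_exp :: "real \<Rightarrow> real \<Rightarrow> real \<Rightarrow> (real \<Rightarrow> real) \<Rightarrow> (real \<Rightarrow> real \<Rightarrow> real \<Rightarrow> real) \<Rightarrow> (real \<Rightarrow> real) \<Rightarrow> real" where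
  "Gamma_exp ebar tlo thi f pit d = integral {tlo..thi} (\<lambda>\<theta>. gamma_d ebar pit d \<theta> * f \<theta>)"

definition pareto_efficient ::
  "real \<Rightarrow> real \<Rightarrow> real \<Rightarrow> (real \<Rightarrow> real) \<Rightarrow> (real \<Rightarrow> real \<Rightarrow> real \<Rightarrow> real) \<Rightarrow> (real \<Rightarrow> real) \<Rightarrow> bool" where
  "pareto_efficient ebar tlo thi f pit d \<longleftrightarrow> d \<in> Dset ebar tlo thi pit \<and>
     \<not> (\<exists>d'\<in>Dset ebar tlo thi pit.
          Pi_exp ebar tlo thi f pit d' \<ge> Pi_exp ebar tlo thi f pit d \<and>
          Gamma_exp ebar tlo thi f pit d' \<le> Gamma_exp ebar tlo thi f pit d \<and>
          (Pi_exp ebar tlo thi f pit d' > Pi_exp ebar tlo thi f pit d \<or>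
           Gamma_exp ebar tlo thi f pit d' < Gamma_exp ebar tlo thi f pit d))"

definition ehat_image :: "real \<Rightarrow> real \<Rightarrow> real \<Rightarrow> (real \<Rightarrow> real \<Rightarrow> real \<Rightarrow> real) \<Rightarrow> real set" where
  "ehat_image ebar tlo thi pit = {e \<in> Eset ebar. \<exists>\<theta>\<in>{tlo..thi}.
      \<forall>e'\<in>Eset ebar. pi_diag pit \<theta> e' \<le> pi_diag pit \<theta> e}"

definition full_disclosure ::
  "real \<Rightarrow> real \<Rightarrow> real \<Rightarrow> (real \<Rightarrow> real \<Rightarrow> real \<Rightarrow> real) \<Rightarrow> (real \<Rightarrow> real) \<Rightarrow> bool" where
  "full_disclosure ebar tlo thi pit d \<longleftrightarrow> is_policy ebar d \<and>
     (\<forall>e\<in>ehat_image ebar tlo thi pit. \<forall>e'\<in>Eset ebar. d e' = d e \<longrightarrow> e' = e)"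

end

theory Submission
  imports Defs
begin

text \<open>Under full disclosure every unconstrained optimum of \<open>\<pi>(\<theta>, \<cdot>)\<close> is belief-compatible, so
  every type earns its first-best profit and \<open>\<Pi>(d\<^sub>F) \<ge> \<Pi>(d)\<close> for every \<open>d \<in> \<D>\<close>.
  Hence if \<open>\<Gamma>(d\<^sub>F) < \<Gamma>(d)\<close>, then \<open>d\<^sub>F\<close> would Pareto-dominate \<open>d\<close>. The profit comparison
  passes to the integrals because the value function \<open>\<pi>\<^sub>d\<close>, a supremum of a jointly continuous
  function over a fixed set, is continuous in \<open>\<theta>\<close>.\<close>

lemma SUP_abs_diff_le:
  fixes g h :: "'a \<Rightarrow> real"
  assumes "S \<noteq> {}" "bdd_above (g ` S)" "bdd_above (h ` S)"
    and "\<And>e. e \<in> S \<Longrightarrow> \<bar>g e - h e\<bar> \<le> c"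
  shows "\<bar>(SUP e\<in>S. g e) - (SUP e\<in>S. h e)\<bar> \<le> c"
proof -
  have "(SUP e\<in>S. g e) \<le> (SUP e\<in>S. h e) + c"
  proof (rule cSUP_least[OF assms(1)])
    fix e assume "e \<in> S"
    then show "g e \<le> (SUP e\<in>S. h e) + c"
      using assms(4)[of e] cSUP_upper[OF _ assms(3)] by fastforce
  qed
  moreover have "(SUP e\<in>S. h e) \<le> (SUP e\<in>S. g e) + c"
  proof (rule cSUP_least[OF assms(1)])
    fix e assume "e \<in> S"
    then show "h e \<le> (SUP e\<in>S. g e) + c"
      using assms(4)[of e] cSUP_upper[OF _ assms(2)] by fastforce
  qed
  ultimately show ?thesis by linarith
qed

lemma continuous_on_SUP_compact:
  fixes g :: "'a::metric_space \<Rightarrow> 'b::metric_space \<Rightarrow> real"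
  assumes cont: "continuous_on (T \<times> E) (\<lambda>(t, e). g t e)"
    and "compact T" "compact E" "S \<subseteq> E" "S \<noteq> {}"
  shows "continuous_on T (\<lambda>t. SUP e\<in>S. g t e)"
proof -
  have TE: "compact (T \<times> E)" using assms(2,3) by (rule compact_Times)
  have unif: "uniformly_continuous_on (T \<times> E) (\<lambda>(t, e). g t e)"
    using compact_uniformly_continuous[OF cont TE] .
  have bdd: "bdd_above (g t ` S)" if "t \<in> T" for t
  proof -
    have "bdd_above ((\<lambda>(t, e). g t e) ` (T \<times> E))"
      using compact_continuous_image[OF cont TE] by (intro bounded_imp_bdd_above compact_imp_bounded)
    then show ?thesis
      using that assms(4) by (auto simp: bdd_above_def)
  qed
  have "uniformly_continuous_on T (\<lambda>t. SUP e\<in>S. g t e)"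
    unfolding uniformly_continuous_on_def
  proof (intro allI impI)
    fix \<epsilon> :: real assume "\<epsilon> > 0"
    then obtain \<delta> where "\<delta> > 0" and \<delta>: "\<And>x x'. x \<in> T \<times> E \<Longrightarrow> x' \<in> T \<times> E \<Longrightarrow> dist x' x < \<delta> \<Longrightarrow>
        dist ((\<lambda>(t, e). g t e) x') ((\<lambda>(t, e). g t e) x) < \<epsilon> / 2"
      using unif[unfolded uniformly_continuous_on_def, rule_format, of "\<epsilon> / 2"] by auto
    have "dist (SUP e\<in>S. g t' e) (SUP e\<in>S. g t e) < \<epsilon>"
      if "t \<in> T" "t' \<in> T" "dist t' t < \<delta>" for t t'
    proof -
      have "\<bar>g t' e - g t e\<bar> \<le> \<epsilon> / 2" if "e \<in> S" for e
        using \<delta>[of "(t, e)" "(t', e)"] \<open>t \<in> T\<close> \<open>t' \<in> T\<close> \<open>dist t' t < \<delta>\<close> \<open>e \<in> S\<close> assms(4)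
        by (auto simp: dist_Pair_Pair dist_real_def)
      then have "\<bar>(SUP e\<in>S. g t' e) - (SUP e\<in>S. g t e)\<bar> \<le> \<epsilon> / 2"
        using SUP_abs_diff_le[OF assms(5) bdd bdd] that by blast
      then show ?thesis using \<open>\<epsilon> > 0\<close> by (simp add: dist_real_def)
    qed
    then show "\<exists>\<delta>>0. \<forall>t\<in>T. \<forall>t'\<in>T. dist t' t < \<delta> \<longrightarrow>
        dist (SUP e\<in>S. g t' e) (SUP e\<in>S. g t e) < \<epsilon>"
      using \<open>\<delta> > 0\<close> by blast
  qed
  then show ?thesis by (rule uniformly_continuous_imp_continuous)
qed

lemma model_assmsD:
  assumes "model_assms ebar tlo thi f pit"
  shows "ebar > 0" and "tlo < thi" and "continuous_on {tlo..thi} f"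
    and "\<And>\<theta>. \<theta> \<in> {tlo..thi} \<Longrightarrow> f \<theta> \<ge> 0"
    and "continuous_on ({tlo..thi} \<times> Eset ebar \<times> Eset ebar) (\<lambda>(\<theta>, e, e'). pit \<theta> e e')"
  using assms unfolding model_assms_def by (elim conjE; simp)+

lemma continuous_on_pi_diag:
  assumes "model_assms ebar tlo thi f pit"
  shows "continuous_on ({tlo..thi} \<times> Eset ebar) (\<lambda>(\<theta>, e). pi_diag pit \<theta> e)"
proof -
  have "continuous_on ({tlo..thi} \<times> Eset ebar)
      ((\<lambda>(\<theta>, e, e'). pit \<theta> e e') \<circ> (\<lambda>(\<theta>, e). (\<theta>, e, e)))"
    using model_assmsD(5)[OF assms]
    by (intro continuous_on_compose) (auto intro: continuous_on_subset simp: case_prod_unfold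
        intro!: continuous_intros)
  then show ?thesis
    by (simp add: pi_diag_def case_prod_unfold o_def)
qed

lemma compact_Eset: "compact (Eset ebar)"
  by (simp add: Eset_def)

lemma
  assumes "model_assms ebar tlo thi f pit" "\<theta> \<in> {tlo..thi}"
  shows continuous_on_pi_diag_at_type: "continuous_on (Eset ebar) (pi_diag pit \<theta>)"
    and bdd_above_pi_diag: "bdd_above (pi_diag pit \<theta> ` Eset ebar)"
proof -
  have "continuous_on (Eset ebar) ((\<lambda>(\<theta>, e). pi_diag pit \<theta> e) \<circ> Pair \<theta>)"
    using assms(2) by (intro continuous_on_compose continuous_on_subset[OF continuous_on_pi_diag[OF assms(1)]])
      (auto intro!: continuous_intros)
  then show cont: "continuous_on (Eset ebar) (pi_diag pit \<theta>)"
    by (simp add: o_def)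
  show "bdd_above (pi_diag pit \<theta> ` Eset ebar)"
    using compact_continuous_image[OF cont compact_Eset]
    by (intro bounded_imp_bdd_above compact_imp_bounded)
qed

lemma ehat_image_maximizer:
  assumes "model_assms ebar tlo thi f pit" "\<theta> \<in> {tlo..thi}"
  shows "\<exists>e\<in>ehat_image ebar tlo thi pit. \<forall>e'\<in>Eset ebar. pi_diag pit \<theta> e' \<le> pi_diag pit \<theta> e"
proof -
  have "Eset ebar \<noteq> {}"
    using model_assmsD(1)[OF assms(1)] by (simp add: Eset_def)
  then obtain e where "e \<in> Eset ebar" "\<forall>e'\<in>Eset ebar. pi_diag pit \<theta> e' \<le> pi_diag pit \<theta> e"
    using continuous_attains_sup[OF compact_Eset _ continuous_on_pi_diag_at_type[OF assms]] by blast
  with assms(2) show ?thesis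
    unfolding ehat_image_def by blast
qed

lemma Etilde_subset_Eset: "Etilde ebar d \<subseteq> Eset ebar"
  by (auto simp: Etilde_def)

lemma ehat_image_subset_Etilde:
  assumes "full_disclosure ebar tlo thi pit dF"
  shows "ehat_image ebar tlo thi pit \<subseteq> Etilde ebar dF"
proof
  fix e assume "e \<in> ehat_image ebar tlo thi pit"
  then have "e \<in> Eset ebar" "\<And>e'. e' \<in> Eset ebar \<Longrightarrow> dF e' = dF e \<Longrightarrow> e' = e"
    using assms unfolding full_disclosure_def ehat_image_def by blast+
  then show "e \<in> Etilde ebar dF"
    unfolding Etilde_def by auto
qed

lemma Etilde_nonempty:
  assumes "tlo \<le> thi" "d \<in> Dset ebar tlo thi pit"
  shows "Etilde ebar d \<noteq> {}"
proof -
  have "tlo \<in> {tlo..thi}"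
    using assms(1) by simp
  then show ?thesis
    using assms(2) unfolding Dset_def by blast
qed

lemma full_disclosure_in_Dset:
  assumes "model_assms ebar tlo thi f pit" "full_disclosure ebar tlo thi pit dF"
  shows "dF \<in> Dset ebar tlo thi pit"
proof -
  have "\<exists>e\<in>Etilde ebar dF. \<forall>e'\<in>Etilde ebar dF. pi_diag pit \<theta> e' \<le> pi_diag pit \<theta> e"
    if \<theta>: "\<theta> \<in> {tlo..thi}" for \<theta>
  proof -
    obtain e where "e \<in> ehat_image ebar tlo thi pit"
      and "\<forall>e'\<in>Eset ebar. pi_diag pit \<theta> e' \<le> pi_diag pit \<theta> e"
      using ehat_image_maximizer[OF assms(1) \<theta>] by blast
    then show ?thesis
      using ehat_image_subset_Etilde[OF assms(2)] Etilde_subset_Eset[of ebar dF] by blast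
  qed
  moreover have "is_policy ebar dF"
    using assms(2) unfolding full_disclosure_def by blast
  ultimately show ?thesis
    unfolding Dset_def by blast
qed

lemma pi_d_le_full_disclosure:
  assumes "model_assms ebar tlo thi f pit" "full_disclosure ebar tlo thi pit dF"
    and "d \<in> Dset ebar tlo thi pit" "\<theta> \<in> {tlo..thi}"
  shows "pi_d ebar pit d \<theta> \<le> pi_d ebar pit dF \<theta>"
proof -
  obtain e where e: "e \<in> ehat_image ebar tlo thi pit"
    and max: "\<forall>e'\<in>Eset ebar. pi_diag pit \<theta> e' \<le> pi_diag pit \<theta> e"
    using ehat_image_maximizer[OF assms(1,4)] by blast
  have "pi_d ebar pit d \<theta> \<le> pi_diag pit \<theta> e"
    unfolding pi_d_def using Etilde_nonempty[OF _ assms(3)] assms(4) Etilde_subset_Eset max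
    by (intro cSUP_least) auto
  also have "\<dots> \<le> pi_d ebar pit dF \<theta>"
    unfolding pi_d_def
  proof (rule cSUP_upper)
    show "e \<in> Etilde ebar dF"
      using e ehat_image_subset_Etilde[OF assms(2)] by blast
    show "bdd_above (pi_diag pit \<theta> ` Etilde ebar dF)"
      by (rule bdd_above_mono[OF bdd_above_pi_diag[OF assms(1,4)] image_mono[OF Etilde_subset_Eset]])
  qed
  finally show ?thesis .
qed

lemma continuous_on_pi_d:
  assumes "model_assms ebar tlo thi f pit" "d \<in> Dset ebar tlo thi pit"
  shows "continuous_on {tlo..thi} (pi_d ebar pit d)"
proof -
  have "tlo \<le> thi"
    using model_assmsD(2)[OF assms(1)] by simp
  then show ?thesis
    unfolding pi_d_def
    by (intro continuous_on_SUP_compact[OF continuous_on_pi_diag[OF assms(1)] compact_Icc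
          compact_Eset Etilde_subset_Eset Etilde_nonempty[OF _ assms(2)]])
qed

lemma Pi_exp_le_full_disclosure:
  assumes "model_assms ebar tlo thi f pit" "full_disclosure ebar tlo thi pit dF"
    and "d \<in> Dset ebar tlo thi pit"
  shows "Pi_exp ebar tlo thi f pit d \<le> Pi_exp ebar tlo thi f pit dF"
proof -
  note f = model_assmsD(3,4)[OF assms(1)]
  have integrable: "(\<lambda>\<theta>. pi_d ebar pit d' \<theta> * f \<theta>) integrable_on {tlo..thi}"
    if "d' \<in> Dset ebar tlo thi pit" for d'
    using continuous_on_pi_d[OF assms(1) that] f(1)
    by (intro integrable_continuous_interval continuous_on_mult)
  show ?thesis
    unfolding Pi_exp_def
    using integrable[OF assms(3)] integrable[OF full_disclosure_in_Dset[OF assms(1,2)]]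
    by (rule integral_le) (intro mult_right_mono pi_d_le_full_disclosure[OF assms] f(2))
qed

theorem proposition5:
  fixes ebar tlo thi :: real and f :: "real \<Rightarrow> real"
    and pit :: "real \<Rightarrow> real \<Rightarrow> real \<Rightarrow> real" and dF d :: "real \<Rightarrow> real"
  assumes "model_assms ebar tlo thi f pit"
    and "full_disclosure ebar tlo thi pit dF"
    and "pareto_efficient ebar tlo thi f pit d"
  shows "Gamma_exp ebar tlo thi f pit dF \<ge> Gamma_exp ebar tlo thi f pit d"
proof (rule ccontr)
  assume "\<not> ?thesis"
  have "d \<in> Dset ebar tlo thi pit"
    using assms(3) unfolding pareto_efficient_def by blast
  then have "Pi_exp ebar tlo thi f pit dF \<ge> Pi_exp ebar tlo thi f pit d"
    by (rule Pi_exp_le_full_disclosure[OF assms(1,2)])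
  with \<open>\<not> ?thesis\<close> show False
    using assms(3) full_disclosure_in_Dset[OF assms(1,2)] unfolding pareto_efficient_def by auto
qed

end
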